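(* There exists a constant $C_0$ such that for every $m,\ell\ge1$, every choice of $\sigma_1\ge\sigma_2\ge\dots\ge\sigma_m\ge0$, $\rho_1\ge\rho_2\ge\dots\ge\rho_\ell>0$, $b_1,\dots,b_m>0$, $c_1,\dots,c_\ell>0$, every $1\le k\le\ell$, and both choices of sign, \[ \Bigl|\int_0^{\sqrt{\rho_\ell}}e^{\frac12i\lambda^2}e^{\pm i\sum_{j=1}^mb_j\sqrt{\lambda^2+\sigma_j}}\exp\Bigl(-\sum_{i=1}^\ell c_i\sqrt{\rho_i-\lambda^2}\Bigr)\frac{\lambda}{\sqrt{\rho_k-\lambda^2}}\,d\lambda\Bigr|\le C_0\min\Bigl[(1+\sigma_1+\rho_\ell)^{1/4},\ m^{3/2}c_k^{-1}\max_{j,i}(b_j+c_i)\Bigr]. \] *)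

theory Defs
  imports "HOL-Analysis.Analysis"
begin

end

theory Submission
  imports Defs
begin

(*
  Write the integrand as f = e^{iP} E x / R, with phase P x = x^2/2 + s Sum_j b_j sqrt (x^2 + sigma_j),
  damping factor E and R = sqrt (rho_k - x^2). Then P' x = x Q x, where Q = 1 + s g and
  g = Sum_j b_j / sqrt (x^2 + sigma_j) is decreasing.

  On every interval [u, v] two elementary bounds hold: |f| <= x e^{-c_k R} / R is the derivative
  of e^{-c_k R} / c_k and at most x / R = - R', so the integral is at most 1 / c_k and at most
  R u - R v <= sqrt (v^2 - u^2). Where |Q| >= eps, van der Corput's lemma (the second mean value
  theorem applied to the monotone amplitudes E / R and 1 / Q) bounds it by 32 / (R v * eps).

  Beyond x = 2 Sum_j b_j we have Q >= 1/2, so the second term of the minimum follows from the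
  trivial bounds on [0, 2 Sum_j b_j] and on the last layer where R < 1, and van der Corput in
  between. For the first term put D = sqrt (1 + sigma_1 + rho_l). With s = 1, Q >= 1 everywhere.
  With s = -1, Q increases; away from a layer at the endpoint R >= sqrt D, and where |Q| >= 1/D
  van der Corput gives O (sqrt D). On the stretch [p, q] where |Q| <= 1/D, g drops by at most
  2/D, while g y (y^2 - x^2) / (2 D^2) <= g x - g y, so q^2 - p^2 <= 8 D and the trivial
  bound gives O (sqrt D) as well.
*)

lemma second_mean_value_bound:
  fixes f g :: "real \<Rightarrow> real"
  assumes "a \<le> b" and f: "f integrable_on {a..b}"
    and f_bound: "\<And>y z. a \<le> y \<Longrightarrow> y \<le> z \<Longrightarrow> z \<le> b \<Longrightarrow> \<bar>integral {y..z} f\<bar> \<le> M"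
    and g_mono: "mono_on {a..b} g \<or> antimono_on {a..b} g"
    and g_bound: "\<And>x. x \<in> {a..b} \<Longrightarrow> \<bar>g x\<bar> \<le> K"
  shows "(\<lambda>x. g x * f x) integrable_on {a..b} \<and> \<bar>integral {a..b} (\<lambda>x. g x * f x)\<bar> \<le> 2 * K * M"
proof -
  have increasing: "(\<lambda>x. h x * f x) integrable_on {a..b} \<and> \<bar>integral {a..b} (\<lambda>x. h x * f x)\<bar> \<le> 2 * K * M"
    if h_mono: "mono_on {a..b} h" and h_bound: "\<And>x. x \<in> {a..b} \<Longrightarrow> \<bar>h x\<bar> \<le> K" for h
  proof -
    have "h x \<le> h y" if "a \<le> x" "x \<le> y" "y \<le> b" for x y
      using h_mono that by (auto intro: mono_onD)
    then obtain c where c: "c \<in> {a..b}" and hc: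
        "((\<lambda>x. h x * f x) has_integral h a * integral {a..c} f + h b * integral {c..b} f) {a..b}"
      using second_mean_value_theorem_full[OF f \<open>a \<le> b\<close>] by blast
    have "\<bar>h a * integral {a..c} f\<bar> \<le> K * M" "\<bar>h b * integral {c..b} f\<bar> \<le> K * M"
      using c \<open>a \<le> b\<close> h_bound[of a] unfolding abs_mult by (intro mult_mono h_bound f_bound; simp)+
    then show ?thesis using hc integral_unique[OF hc] by auto
  qed
  from g_mono show ?thesis
  proof
    assume "mono_on {a..b} g"
    then show ?thesis using increasing g_bound by blast
  next
    assume "antimono_on {a..b} g"
    then have "mono_on {a..b} (\<lambda>x. - g x)" by (auto intro!: mono_onI dest: monotone_onD)
    from increasing[OF this] show ?thesis using g_bound by (auto dest: integrable_neg)
  qed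
qed

lemma second_mean_value_bound_complex:
  fixes \<phi> :: "real \<Rightarrow> complex" and g :: "real \<Rightarrow> real"
  assumes "a \<le> b" and \<phi>: "\<phi> integrable_on {a..b}"
    and \<phi>_bound: "\<And>y z. a \<le> y \<Longrightarrow> y \<le> z \<Longrightarrow> z \<le> b \<Longrightarrow> norm (integral {y..z} \<phi>) \<le> M"
    and g_mono: "mono_on {a..b} g \<or> antimono_on {a..b} g"
    and g_bound: "\<And>x. x \<in> {a..b} \<Longrightarrow> \<bar>g x\<bar> \<le> K"
  shows "(\<lambda>x. of_real (g x) * \<phi> x) integrable_on {a..b}
    \<and> norm (integral {a..b} (\<lambda>x. of_real (g x) * \<phi> x)) \<le> 4 * K * M"
proof -
  have part: "(\<lambda>x. g x * p (\<phi> x)) integrable_on {a..b}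
      \<and> \<bar>integral {a..b} (\<lambda>x. g x * p (\<phi> x))\<bar> \<le> 2 * K * M"
    if p: "p = Re \<or> p = Im" for p
  proof (rule second_mean_value_bound[OF \<open>a \<le> b\<close> _ _ g_mono g_bound])
    have p_integral: "((\<lambda>x. p (\<phi> x)) has_integral p (integral {y..z} \<phi>)) {y..z}"
      if "a \<le> y" "z \<le> b" for y z
      using p integrable_subinterval_real[OF \<phi>] that by (auto intro: has_integral_Re has_integral_Im)
    then show "(\<lambda>x. p (\<phi> x)) integrable_on {a..b}" by blast
    show "\<bar>integral {y..z} (\<lambda>x. p (\<phi> x))\<bar> \<le> M" if "a \<le> y" "y \<le> z" "z \<le> b" for y z
      using p p_integral[of y z] \<phi>_bound[of y z] that
        abs_Re_le_cmod[of "integral {y..z} \<phi>"] abs_Im_le_cmod[of "integral {y..z} \<phi>"]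
      by (auto simp: integral_unique)
  qed
  note re = part[of Re, simplified] and im = part[of Im, simplified]
  define I where "I = Complex (integral {a..b} (\<lambda>x. g x * Re (\<phi> x))) (integral {a..b} (\<lambda>x. g x * Im (\<phi> x)))"
  have "((\<lambda>x. of_real (g x) * \<phi> x) has_integral I) {a..b}"
    using re im by (subst has_integral_componentwise_iff) (auto simp: Basis_complex_def I_def)
  moreover have "norm I \<le> 4 * K * M"
    using cmod_le[of I] re im by (simp add: I_def)
  ultimately show ?thesis by (auto simp: integral_unique)
qed

lemma van_der_Corput_amplitude_bound:
  fixes P P' g h :: "real \<Rightarrow> real"
  assumes "a \<le> b"
    and P_deriv: "\<And>x. x \<in> {a..b} \<Longrightarrow> (P has_real_derivative P' x) (at x)"
    and g_mono: "mono_on {a..b} g \<or> antimono_on {a..b} g"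
    and g_bound: "\<And>x. x \<in> {a..b} \<Longrightarrow> \<bar>g x\<bar> \<le> K"
    and h_mono: "mono_on {a..b} h \<or> antimono_on {a..b} h"
    and h_bound: "\<And>x. x \<in> {a..b} \<Longrightarrow> \<bar>h x\<bar> \<le> H"
  shows "norm (integral {a..b} (\<lambda>x. exp (\<i> * of_real (P x)) * of_real (g x * h x * P' x)))
    \<le> 32 * K * H"
proof -
  define \<phi> where "\<phi> x = exp (\<i> * of_real (P x)) * (\<i> * of_real (P' x))" for x
  have \<phi>_integral: "(\<phi> has_integral (exp (\<i> * of_real (P z)) - exp (\<i> * of_real (P y)))) {y..z}"
    if "a \<le> y" "y \<le> z" "z \<le> b" for y z
  proof (rule fundamental_theorem_of_calculus[OF \<open>y \<le> z\<close>, of "\<lambda>x. exp (\<i> * of_real (P x))"])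
    fix x assume "x \<in> {y..z}"
    then have "(P has_real_derivative P' x) (at x)" using P_deriv that by simp
    then have "((\<lambda>x. of_real (P x)) has_vector_derivative of_real (P' x)) (at x within {y..z})"
      by (rule has_vector_derivative_of_real[OF has_field_derivative_at_within])
    moreover have "((\<lambda>w. exp (\<i> * w)) has_field_derivative \<i> * exp (\<i> * of_real (P x)))
        (at (of_real (P x)) within (\<lambda>x. of_real (P x)) ` {y..z})"
      by (auto intro!: derivative_eq_intros)
    ultimately have "((\<lambda>w. exp (\<i> * w)) \<circ> (\<lambda>x. of_real (P x)) has_vector_derivative
        of_real (P' x) * (\<i> * exp (\<i> * of_real (P x)))) (at x within {y..z})"
      by (rule field_vector_diff_chain_within)
    then show "((\<lambda>x. exp (\<i> * of_real (P x))) has_vector_derivative \<phi> x) (at x within {y..z})"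
      by (simp add: \<phi>_def o_def mult_ac)
  qed
  have h\<phi>: "(\<lambda>x. of_real (h x) * \<phi> x) integrable_on {y..z}
      \<and> norm (integral {y..z} (\<lambda>x. of_real (h x) * \<phi> x)) \<le> 4 * H * 2"
    if "a \<le> y" "y \<le> z" "z \<le> b" for y z
  proof (rule second_mean_value_bound_complex[OF \<open>y \<le> z\<close>])
    show "\<phi> integrable_on {y..z}" using \<phi>_integral[OF that] by (rule has_integral_integrable)
    show "norm (integral {y'..z'} \<phi>) \<le> 2" if "y \<le> y'" "y' \<le> z'" "z' \<le> z" for y' z'
      using \<phi>_integral[of y' z'] that \<open>a \<le> y\<close> \<open>z \<le> b\<close>
        norm_triangle_ineq4[of "exp (\<i> * of_real (P z'))" "exp (\<i> * of_real (P y'))"]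
      by (simp add: integral_unique)
    show "mono_on {y..z} h \<or> antimono_on {y..z} h"
      using h_mono monotone_on_subset[of "{a..b}" _ _ h "{y..z}"] that by auto
    show "\<bar>h x\<bar> \<le> H" if "x \<in> {y..z}" for x using h_bound that \<open>a \<le> y\<close> \<open>z \<le> b\<close> by auto
  qed
  have "(\<lambda>x. of_real (g x) * (of_real (h x) * \<phi> x)) integrable_on {a..b}
      \<and> norm (integral {a..b} (\<lambda>x. of_real (g x) * (of_real (h x) * \<phi> x))) \<le> 4 * K * (4 * H * 2)"
  proof (rule second_mean_value_bound_complex[OF \<open>a \<le> b\<close> _ _ g_mono g_bound])
    show "(\<lambda>x. of_real (h x) * \<phi> x) integrable_on {a..b}" using h\<phi>[of a b] \<open>a \<le> b\<close> by simp
    show "norm (integral {y..z} (\<lambda>x. of_real (h x) * \<phi> x)) \<le> 4 * H * 2"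
      if "a \<le> y" "y \<le> z" "z \<le> b" for y z
      using h\<phi>[OF that] by simp
  qed
  moreover have "exp (\<i> * of_real (P x)) * of_real (g x * h x * P' x)
      = - \<i> * (of_real (g x) * (of_real (h x) * \<phi> x))" for x
    by (simp add: \<phi>_def algebra_simps)
  ultimately show ?thesis by (simp add: norm_mult)
qed

lemma monotone_inverse_of_constant_sign:
  fixes h :: "'a::order \<Rightarrow> 'b::linordered_field"
  assumes h_mono: "mono_on S h \<or> antimono_on S h"
    and h_sign: "(\<forall>x\<in>S. 0 < h x) \<or> (\<forall>x\<in>S. h x < 0)"
  shows "mono_on S (\<lambda>x. inverse (h x)) \<or> antimono_on S (\<lambda>x. inverse (h x))"
proof -
  have inverse_le: "inverse (h y) \<le> inverse (h x)" if "x \<in> S" "y \<in> S" "h x \<le> h y" for x y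
    using h_sign that le_imp_inverse_le le_imp_inverse_le_neg by blast
  from h_mono show ?thesis
    by (auto intro!: monotone_onI inverse_le dest: monotone_onD)
qed

lemma mono_on_sign_partition:
  fixes Q :: "real \<Rightarrow> real"
  assumes "a \<le> b" and Q_cont: "continuous_on {a..b} Q" and Q_mono: "mono_on {a..b} Q"
    and "0 < \<epsilon>"
  obtains p q where "a \<le> p" "p \<le> q" "q \<le> b"
    "p = a \<or> (\<forall>x\<in>{a..p}. Q x \<le> - \<epsilon>)"
    "p = q \<or> (- \<epsilon> \<le> Q p \<and> Q q \<le> \<epsilon>)"
    "q = b \<or> (\<forall>x\<in>{q..b}. \<epsilon> \<le> Q x)"
proof -
  have Q_le: "Q x \<le> Q y" if "a \<le> x" "x \<le> y" "y \<le> b" for x y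
    using Q_mono that by (auto intro: mono_onD)
  consider "Q b \<le> - \<epsilon>" | "\<epsilon> \<le> Q a" | "- \<epsilon> < Q b" "Q a < \<epsilon>" by linarith
  then show ?thesis
  proof cases
    case 1
    then show ?thesis using that[of b b] Q_le \<open>a \<le> b\<close> by force
  next
    case 2
    then show ?thesis using that[of a a] Q_le \<open>a \<le> b\<close> by force
  next
    case 3
    obtain p where p: "a \<le> p" "p \<le> b" "- \<epsilon> \<le> Q p" "Q p < \<epsilon>"
      and p_left: "p = a \<or> (\<forall>x\<in>{a..p}. Q x \<le> - \<epsilon>)"
    proof (cases "- \<epsilon> \<le> Q a")
      case True
      then show ?thesis using that[of a] 3 \<open>a \<le> b\<close> by auto
    next
      case False
      then obtain p where "a \<le> p" "p \<le> b" "Q p = - \<epsilon>"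
        using IVT'[of Q a "- \<epsilon>" b] 3 \<open>a \<le> b\<close> Q_cont by auto
      then show ?thesis using that[of p] Q_le \<open>0 < \<epsilon>\<close> by force
    qed
    obtain q where q: "p \<le> q" "q \<le> b" "Q q \<le> \<epsilon>"
      and q_right: "q = b \<or> (\<forall>x\<in>{q..b}. \<epsilon> \<le> Q x)"
    proof (cases "Q b \<le> \<epsilon>")
      case True
      then show ?thesis using that[of b] p by auto
    next
      case False
      then obtain q where "p \<le> q" "q \<le> b" "Q q = \<epsilon>"
        using IVT'[of Q p \<epsilon> b] p continuous_on_subset[OF Q_cont, of "{p..b}"] by auto
      then show ?thesis using that[of q] Q_le p by force
    qed
    show ?thesis using p p_left q q_right by (intro that[of p q]) auto
  qed
qed

lemma inverse_sqrt_decrement: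
  fixes \<alpha> \<beta> K :: real
  assumes "0 < \<alpha>" "\<alpha> \<le> \<beta>" "\<beta> \<le> K"
  shows "(\<beta> - \<alpha>) / (2 * K * sqrt \<beta>) \<le> 1 / sqrt \<alpha> - 1 / sqrt \<beta>"
proof -
  define a c where "a = sqrt \<alpha>" and "c = sqrt \<beta>"
  have "0 < a" "a \<le> c" "c\<^sup>2 \<le> K" using assms by (auto simp: a_def c_def)
  have "a * (c + a) \<le> c * (c + c)" using \<open>0 < a\<close> \<open>a \<le> c\<close> by (intro mult_mono) auto
  then have "a * (c + a) \<le> 2 * K" using \<open>c\<^sup>2 \<le> K\<close> by (simp add: power2_eq_square)
  then have "(c + a) * (a * c) \<le> 2 * K * c"
    using mult_right_mono[of _ _ c] \<open>0 < a\<close> \<open>a \<le> c\<close> by (fastforce simp: algebra_simps)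
  moreover have "0 < K" using \<open>0 < a\<close> \<open>a \<le> c\<close> \<open>c\<^sup>2 \<le> K\<close>
    by (metis order_less_le_trans zero_less_power)
  ultimately have "(c + a) / (2 * K * c) \<le> 1 / (a * c)"
    using \<open>0 < a\<close> \<open>a \<le> c\<close> by (simp add: divide_simps)
  then have "(c - a) * ((c + a) / (2 * K * c)) \<le> (c - a) * (1 / (a * c))"
    using \<open>a \<le> c\<close> by (intro mult_left_mono) auto
  moreover have "\<beta> - \<alpha> = (c - a) * (c + a)" using assms by (simp add: a_def c_def algebra_simps)
  then have "(\<beta> - \<alpha>) / (2 * K * sqrt \<beta>) = (c - a) * ((c + a) / (2 * K * c))"
    by (simp add: c_def)
  moreover have "1 / sqrt \<alpha> - 1 / sqrt \<beta> = (c - a) * (1 / (a * c))"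
    using \<open>0 < a\<close> \<open>a \<le> c\<close> unfolding a_def[symmetric] c_def[symmetric] by (simp add: field_simps)
  ultimately show ?thesis by simp
qed

lemma antitone_steps_le:
  fixes a :: "nat \<Rightarrow> 'a::preorder"
  assumes steps: "\<forall>j\<in>{n..<m}. a (Suc j) \<le> a j" and "n \<le> i" "i \<le> j" "j \<le> m"
  shows "a j \<le> a i"
  using \<open>i \<le> j\<close> \<open>j \<le> m\<close>
proof (induction j rule: dec_induct)
  case (step j)
  then have "a (Suc j) \<le> a j" using steps \<open>n \<le> i\<close> by auto
  then show ?case using step order_trans by auto
qed simp

locale damped_oscillatory_integral =
  fixes m l :: nat and \<sigma> \<rho> b c :: "nat \<Rightarrow> real" and k :: nat and s :: real
  assumes m_pos: "1 \<le> m" and l_pos: "1 \<le> l"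
    and \<sigma>_antitone: "\<forall>j\<in>{1..<m}. \<sigma> j \<ge> \<sigma> (Suc j)" and \<sigma>_m_nonneg: "\<sigma> m \<ge> 0"
    and \<rho>_antitone: "\<forall>i\<in>{1..<l}. \<rho> i \<ge> \<rho> (Suc i)" and \<rho>_l_pos: "\<rho> l > 0"
    and b_pos: "\<forall>j\<in>{1..m}. b j > 0" and c_pos: "\<forall>i\<in>{1..l}. c i > 0"
    and k_range: "k \<in> {1..l}" and s_sign: "s \<in> {1, -1}"
begin

definition "L = sqrt (\<rho> l)"
definition "R x = sqrt (\<rho> k - x\<^sup>2)"
definition "E x = exp (- (\<Sum>i=1..l. c i * sqrt (\<rho> i - x\<^sup>2)))"
definition "P x = x\<^sup>2 / 2 + s * (\<Sum>j=1..m. b j * sqrt (x\<^sup>2 + \<sigma> j))"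
definition "g x = (\<Sum>j=1..m. b j / sqrt (x\<^sup>2 + \<sigma> j))"
definition "Q x = 1 + s * g x"
definition "D = sqrt (1 + \<sigma> 1 + \<rho> l)"
definition "B = (\<Sum>j=1..m. b j)"
definition "f = (\<lambda>x::real. exp (\<i> * complex_of_real (x\<^sup>2 / 2))
           * exp (\<i> * complex_of_real (s * (\<Sum>j=1..m. b j * sqrt (x\<^sup>2 + \<sigma> j))))
           * complex_of_real (exp (- (\<Sum>i=1..l. c i * sqrt (\<rho> i - x\<^sup>2)))
                               * x / sqrt (\<rho> k - x\<^sup>2)))"

lemma \<sigma>_nonneg: "j \<in> {1..m} \<Longrightarrow> 0 \<le> \<sigma> j"
  using antitone_steps_le[OF \<sigma>_antitone, of j m] \<sigma>_m_nonneg by auto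

lemma \<sigma>_le_\<sigma>_1: "j \<in> {1..m} \<Longrightarrow> \<sigma> j \<le> \<sigma> 1"
  using antitone_steps_le[OF \<sigma>_antitone, of 1 j] by auto

lemma \<rho>_l_le: "i \<in> {1..l} \<Longrightarrow> \<rho> l \<le> \<rho> i"
  using antitone_steps_le[OF \<rho>_antitone, of i l] by auto

lemma b_nonneg: "j \<in> {1..m} \<Longrightarrow> 0 \<le> b j" using b_pos by (simp add: less_imp_le)

lemma c_k_pos: "0 < c k" using c_pos k_range by auto

lemma L_pos: "0 < L" unfolding L_def using \<rho>_l_pos by auto

lemma L_square: "L\<^sup>2 = \<rho> l" unfolding L_def using \<rho>_l_pos by auto

lemma square_le_\<rho>: "0 \<le> x \<Longrightarrow> x \<le> L \<Longrightarrow> i \<in> {1..l} \<Longrightarrow> x\<^sup>2 \<le> \<rho> i"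
  using power_mono[of x L 2] L_square \<rho>_l_le[of i] by auto

lemma square_less_\<rho>: "0 \<le> x \<Longrightarrow> x < L \<Longrightarrow> i \<in> {1..l} \<Longrightarrow> x\<^sup>2 < \<rho> i"
  using power_strict_mono[of x L 2] L_square \<rho>_l_le[of i] by auto

lemma R_pos: "0 \<le> x \<Longrightarrow> x < L \<Longrightarrow> 0 < R x"
  unfolding R_def using square_less_\<rho> k_range by auto

lemma R_nonneg: "0 \<le> x \<Longrightarrow> x \<le> L \<Longrightarrow> 0 \<le> R x"
  unfolding R_def using square_le_\<rho> k_range by auto

lemma R_antimono: "0 \<le> x \<Longrightarrow> x \<le> y \<Longrightarrow> R y \<le> R x"
  unfolding R_def by (simp add: power_mono)

lemma sqrt_\<rho>_l_diff_le_R: "sqrt (\<rho> l - x\<^sup>2) \<le> R x"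
  unfolding R_def using \<rho>_l_le k_range by simp

lemma continuous_on_R: "continuous_on S R"
  unfolding R_def[abs_def] by (intro continuous_intros)

lemma R_has_derivative:
  assumes "0 \<le> x" "x < L"
  shows "(R has_real_derivative - x / R x) (at x)"
proof -
  have "0 < \<rho> k - x\<^sup>2" using square_less_\<rho>[OF assms k_range] by simp
  then show ?thesis unfolding R_def[abs_def] by (auto intro!: derivative_eq_intros simp: field_simps)
qed

lemma E_pos: "0 < E x" unfolding E_def by simp

lemma E_le_exp_R:
  assumes "0 \<le> x" "x \<le> L"
  shows "E x \<le> exp (- c k * R x)"
proof -
  have "0 \<le> c i * sqrt (\<rho> i - x\<^sup>2)" if "i \<in> {1..l}" for i
    using c_pos square_le_\<rho>[OF assms that] that by (simp add: less_imp_le)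
  then have "c k * sqrt (\<rho> k - x\<^sup>2) \<le> (\<Sum>i=1..l. c i * sqrt (\<rho> i - x\<^sup>2))"
    using member_le_sum[of k "{1..l}" "\<lambda>i. c i * sqrt (\<rho> i - x\<^sup>2)"] k_range by simp
  then show ?thesis unfolding E_def R_def by simp
qed

lemma E_le_1:
  assumes "0 \<le> x" "x \<le> L"
  shows "E x \<le> 1"
proof -
  have "exp (- c k * R x) \<le> 1" using R_nonneg[OF assms] c_k_pos by simp
  then show ?thesis using E_le_exp_R[OF assms] by linarith
qed

lemma E_mono:
  assumes "0 \<le> x" "x \<le> y"
  shows "E x \<le> E y"
proof -
  have "c i * sqrt (\<rho> i - y\<^sup>2) \<le> c i * sqrt (\<rho> i - x\<^sup>2)" if "i \<in> {1..l}" for i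
    using c_pos that assms by (intro mult_left_mono) (auto simp: power_mono less_imp_le)
  then have "(\<Sum>i=1..l. c i * sqrt (\<rho> i - y\<^sup>2)) \<le> (\<Sum>i=1..l. c i * sqrt (\<rho> i - x\<^sup>2))"
    by (intro sum_mono) auto
  then show ?thesis unfolding E_def by simp
qed

lemma E_div_R_mono:
  assumes "0 \<le> x" "x \<le> y" "y < L"
  shows "E x / R x \<le> E y / R y"
  using assms E_mono[of x y] E_pos[of x] R_pos[of y] R_antimono[of x y]
  by (intro frac_le) (auto simp: less_imp_le)

lemma f_eq: "f x = exp (\<i> * of_real (P x)) * of_real (E x * x / R x)"
proof -
  have "exp (\<i> * of_real (x\<^sup>2 / 2)) * exp (\<i> * of_real (s * (\<Sum>j=1..m. b j * sqrt (x\<^sup>2 + \<sigma> j))))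
      = exp (\<i> * of_real (P x))"
    unfolding P_def by (simp add: exp_add[symmetric] distrib_left)
  then show ?thesis unfolding f_def E_def R_def by simp
qed

lemma norm_f_le:
  assumes "0 \<le> x" "x \<le> L"
  shows "norm (f x) \<le> x * exp (- c k * R x) / R x"
proof -
  have "norm (f x) = \<bar>E x * x / R x\<bar>"
    unfolding f_eq norm_mult norm_exp_i_times norm_of_real by simp
  also have "\<dots> = E x * x / R x"
    using assms E_pos[of x] R_nonneg[OF assms] by simp
  also have "\<dots> \<le> exp (- c k * R x) * x / R x"
    using E_le_exp_R[OF assms] assms R_nonneg[OF assms]
    by (intro divide_right_mono mult_right_mono) auto
  finally show ?thesis by (simp add: mult.commute)
qed

lemma envelope_has_integral:
  assumes "0 \<le> u" "u \<le> v" "v \<le> L"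
  shows "((\<lambda>x. x * exp (- c k * R x) / R x) has_integral
    exp (- c k * R v) / c k - exp (- c k * R u) / c k) {u..v}"
proof (rule fundamental_theorem_of_calculus_interior[OF \<open>u \<le> v\<close>])
  show "continuous_on {u..v} (\<lambda>x. exp (- c k * R x) / c k)"
    by (intro continuous_intros continuous_on_R) (use c_k_pos in auto)
  fix x assume "x \<in> {u<..<v}"
  then have "((\<lambda>x. exp (- c k * R x) / c k) has_real_derivative x * exp (- c k * R x) / R x) (at x)"
    using R_has_derivative[of x] assms c_k_pos by (auto intro!: derivative_eq_intros simp: field_simps)
  then show "((\<lambda>x. exp (- c k * R x) / c k) has_vector_derivative x * exp (- c k * R x) / R x) (at x)"
    by (simp add: has_real_derivative_iff_has_vector_derivative)
qed

lemma x_div_R_has_integral: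
  assumes "0 \<le> u" "u \<le> v" "v \<le> L"
  shows "((\<lambda>x. x / R x) has_integral R u - R v) {u..v}"
proof -
  have "((\<lambda>x. x / R x) has_integral (- R v) - (- R u)) {u..v}"
  proof (rule fundamental_theorem_of_calculus_interior[OF \<open>u \<le> v\<close>])
    show "continuous_on {u..v} (\<lambda>x. - R x)" by (intro continuous_intros continuous_on_R)
    fix x assume "x \<in> {u<..<v}"
    then have "((\<lambda>x. - R x) has_real_derivative x / R x) (at x)"
      using R_has_derivative[of x] assms by (auto intro!: derivative_eq_intros)
    then show "((\<lambda>x. - R x) has_vector_derivative x / R x) (at x)"
      by (simp add: has_real_derivative_iff_has_vector_derivative)
  qed
  then show ?thesis by simp
qed

lemma f_integrable: "f integrable_on {0..L}"
proof -
  have "continuous_on {0..<L} f"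
    unfolding f_def using square_less_\<rho>[OF _ _ k_range] by (intro continuous_intros) force+
  moreover have "(\<lambda>x. x * exp (- c k * R x) / R x) integrable_on {0..L}"
    using envelope_has_integral[of 0 L] L_pos by (auto intro: has_integral_integrable)
  then have "(\<lambda>x. x * exp (- c k * R x) / R x) integrable_on {0..<L}"
    by (rule integrable_spike_set) (auto intro: negligible_subset[of "{L}"])
  moreover have "f \<in> borel_measurable (lebesgue_on {0..<L})"
    using \<open>continuous_on {0..<L} f\<close> by (auto intro: continuous_imp_measurable_on_sets_lebesgue)
  ultimately have "f absolutely_integrable_on {0..<L}"
    using norm_f_le by (intro measurable_bounded_by_integrable_imp_absolutely_integrable) auto
  then have "f integrable_on {0..<L}" using set_lebesgue_integral_eq_integral(1) by blast
  then show ?thesis by (rule integrable_spike_set) (auto intro: negligible_subset[of "{L}"])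
qed

lemma
  assumes "0 \<le> u" "u \<le> v" "v \<le> L"
  shows norm_integral_le_inverse_c_k: "norm (integral {u..v} f) \<le> 1 / c k"
    and norm_integral_le_sqrt: "norm (integral {u..v} f) \<le> sqrt (v\<^sup>2 - u\<^sup>2)"
proof -
  have "f integrable_on {u..v}"
    using integrable_subinterval_real[OF f_integrable] assms by auto
  then have "norm (integral {u..v} f) \<le> exp (- c k * R v) / c k - exp (- c k * R u) / c k"
    using integral_norm_bound_integral[of f "{u..v}" "\<lambda>x. x * exp (- c k * R x) / R x"]
      envelope_has_integral[OF assms] norm_f_le assms
    by (auto simp: integral_unique has_integral_integrable)
  note envelope = this
  have "exp (- c k * R v) / c k \<le> 1 / c k" "0 \<le> exp (- c k * R u) / c k"
    using c_k_pos R_nonneg[of v] assms by (auto simp: divide_right_mono)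
  then show "norm (integral {u..v} f) \<le> 1 / c k" using envelope by linarith
  have "exp (- c k * R v) / c k - exp (- c k * R u) / c k \<le> R u - R v"
  proof (rule has_integral_le[OF envelope_has_integral[OF assms] x_div_R_has_integral[OF assms]])
    fix x assume "x \<in> {u..v}"
    then have "0 \<le> x" "x \<le> L" "0 \<le> R x" using assms R_nonneg[of x] by auto
    then show "x * exp (- c k * R x) / R x \<le> x / R x"
      using c_k_pos by (auto intro!: divide_right_mono mult_left_le)
  qed
  also have "R u - R v \<le> sqrt (v\<^sup>2 - u\<^sup>2)"
  proof -
    have "v\<^sup>2 \<le> \<rho> k" "u\<^sup>2 \<le> v\<^sup>2" using square_le_\<rho>[of v k] k_range assms by (auto simp: power_mono)
    then have "sqrt (\<rho> k - u\<^sup>2) \<le> sqrt (\<rho> k - v\<^sup>2) + sqrt (v\<^sup>2 - u\<^sup>2)"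
      using sqrt_add_le_add_sqrt[of "\<rho> k - v\<^sup>2" "v\<^sup>2 - u\<^sup>2"] by simp
    then show ?thesis unfolding R_def by simp
  qed
  finally show "norm (integral {u..v} f) \<le> sqrt (v\<^sup>2 - u\<^sup>2)" using envelope by linarith
qed

lemma norm_integral_split:
  assumes "0 \<le> u" "u \<le> v" "v \<le> w" "w \<le> L"
  shows "norm (integral {u..w} f) \<le> norm (integral {u..v} f) + norm (integral {v..w} f)"
proof -
  have "f integrable_on {u..w}"
    using integrable_subinterval_real[OF f_integrable] assms by auto
  then show ?thesis
    using Henstock_Kurzweil_Integration.integral_combine[OF \<open>u \<le> v\<close> \<open>v \<le> w\<close>]
      norm_triangle_ineq by metis
qed

lemma \<sigma>_1_nonneg: "0 \<le> \<sigma> 1" using \<sigma>_nonneg[of 1] m_pos by simp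

lemma D_square: "D\<^sup>2 = 1 + \<sigma> 1 + \<rho> l" unfolding D_def using \<sigma>_1_nonneg \<rho>_l_pos by simp

lemma D_ge_1: "1 \<le> D" unfolding D_def using \<sigma>_1_nonneg \<rho>_l_pos by simp

lemma B_pos: "0 < B"
  unfolding B_def using b_pos m_pos by (intro sum_pos) auto

lemma square_plus_\<sigma>_pos: "0 < x \<Longrightarrow> j \<in> {1..m} \<Longrightarrow> 0 < x\<^sup>2 + \<sigma> j"
  using \<sigma>_nonneg[of j] by (simp add: add_pos_nonneg)

lemma P_has_derivative:
  assumes "0 < x"
  shows "(P has_real_derivative x * Q x) (at x)"
proof -
  have "((\<lambda>x. sqrt (x\<^sup>2 + \<sigma> j)) has_real_derivative x / sqrt (x\<^sup>2 + \<sigma> j)) (at x)"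
    if "j \<in> {1..m}" for j
    using square_plus_\<sigma>_pos[OF assms that] by (auto intro!: derivative_eq_intros simp: field_simps)
  then have "((\<lambda>x. \<Sum>j=1..m. b j * sqrt (x\<^sup>2 + \<sigma> j)) has_real_derivative
      (\<Sum>j=1..m. b j * (x / sqrt (x\<^sup>2 + \<sigma> j)))) (at x)"
    by (intro DERIV_sum DERIV_cmult) auto
  moreover have "((\<lambda>x. x\<^sup>2 / 2) has_real_derivative x) (at x)"
    by (auto intro!: derivative_eq_intros)
  ultimately have "(P has_real_derivative x + s * (\<Sum>j=1..m. b j * (x / sqrt (x\<^sup>2 + \<sigma> j)))) (at x)"
    unfolding P_def[abs_def] by (intro DERIV_add DERIV_cmult)
  then show ?thesis
    by (rule DERIV_cong) (simp add: Q_def g_def sum_distrib_left field_simps)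
qed

lemma g_nonneg: "0 < x \<Longrightarrow> 0 \<le> g x"
  unfolding g_def using b_pos square_plus_\<sigma>_pos by (intro sum_nonneg) (simp add: less_imp_le)

lemma g_antimono:
  assumes "0 < x" "x \<le> y"
  shows "g y \<le> g x"
  unfolding g_def
proof (rule sum_mono)
  fix j assume j: "j \<in> {1..m}"
  have "sqrt (x\<^sup>2 + \<sigma> j) \<le> sqrt (y\<^sup>2 + \<sigma> j)" using assms by (simp add: power_mono)
  then show "b j / sqrt (y\<^sup>2 + \<sigma> j) \<le> b j / sqrt (x\<^sup>2 + \<sigma> j)"
    using b_nonneg[OF j] square_plus_\<sigma>_pos[OF assms(1) j] by (intro divide_left_mono) auto
qed

lemma g_le_B_div:
  assumes "0 < x"
  shows "g x \<le> B / x"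
  unfolding g_def B_def sum_divide_distrib
proof (rule sum_mono)
  fix j assume j: "j \<in> {1..m}"
  have "x \<le> sqrt (x\<^sup>2 + \<sigma> j)" using \<sigma>_nonneg[OF j] real_le_rsqrt by simp
  then have "0 < sqrt (x\<^sup>2 + \<sigma> j) * x" using assms by (metis mult_pos_pos order_less_le_trans)
  with \<open>x \<le> sqrt (x\<^sup>2 + \<sigma> j)\<close> show "b j / sqrt (x\<^sup>2 + \<sigma> j) \<le> b j / x"
    using b_nonneg[OF j] assms by (intro divide_left_mono)
qed

lemma g_decrement:
  assumes "0 < x" "x \<le> y" "y \<le> L"
  shows "g y * (y\<^sup>2 - x\<^sup>2) / (2 * D\<^sup>2) \<le> g x - g y"
proof -
  have "g y * (y\<^sup>2 - x\<^sup>2) / (2 * D\<^sup>2)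
      = (\<Sum>j=1..m. b j * (((y\<^sup>2 + \<sigma> j) - (x\<^sup>2 + \<sigma> j)) / (2 * D\<^sup>2 * sqrt (y\<^sup>2 + \<sigma> j))))"
    unfolding g_def sum_distrib_right sum_divide_distrib by (intro sum.cong) auto
  also have "\<dots> \<le> (\<Sum>j=1..m. b j * (1 / sqrt (x\<^sup>2 + \<sigma> j) - 1 / sqrt (y\<^sup>2 + \<sigma> j)))"
  proof (intro sum_mono mult_left_mono inverse_sqrt_decrement)
    fix j assume j: "j \<in> {1..m}"
    show "0 < x\<^sup>2 + \<sigma> j" "0 \<le> b j" using square_plus_\<sigma>_pos[OF assms(1) j] b_nonneg[OF j] by auto
    show "x\<^sup>2 + \<sigma> j \<le> y\<^sup>2 + \<sigma> j" using assms by (simp add: power_mono)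
    show "y\<^sup>2 + \<sigma> j \<le> D\<^sup>2"
      using square_le_\<rho>[of y l] assms l_pos \<sigma>_le_\<sigma>_1[OF j] D_square by simp
  qed
  also have "\<dots> = g x - g y" unfolding g_def by (simp add: sum_subtractf right_diff_distrib)
  finally show ?thesis .
qed

lemma Q_eq_if_s_negative: "s = -1 \<Longrightarrow> Q x = 1 - g x"
  unfolding Q_def by simp

lemma Q_monotone: "mono_on {0<..} Q \<or> antimono_on {0<..} Q"
  using s_sign g_antimono unfolding Q_def by (auto intro!: monotone_onI)

lemma continuous_on_Q:
  assumes "0 < u"
  shows "continuous_on {u..v} Q"
proof -
  have "x\<^sup>2 + \<sigma> j \<noteq> 0" if "x \<in> {u..v}" "j \<in> {1..m}" for x j
    using square_plus_\<sigma>_pos[of x j] that assms by force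
  then show ?thesis unfolding Q_def[abs_def] g_def by (intro continuous_intros) auto
qed

lemma norm_integral_le_van_der_Corput:
  assumes "0 < u" "u \<le> v" "v < L" "0 < \<epsilon>"
    and Q_away: "(\<forall>x\<in>{u..v}. \<epsilon> \<le> Q x) \<or> (\<forall>x\<in>{u..v}. Q x \<le> - \<epsilon>)"
  shows "norm (integral {u..v} f) \<le> 32 / (R v * \<epsilon>)"
proof -
  have Q_ne: "\<epsilon> \<le> \<bar>Q x\<bar>" if "x \<in> {u..v}" for x
    using Q_away that by force
  have R_v: "0 < R v" using R_pos assms by simp
  have "f x = exp (\<i> * of_real (P x)) * of_real (E x / R x * inverse (Q x) * (x * Q x))"
    if "x \<in> {u..v}" for x
    using Q_ne[OF that] \<open>0 < \<epsilon>\<close> by (simp add: f_eq)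
  then have "integral {u..v} f
      = integral {u..v} (\<lambda>x. exp (\<i> * of_real (P x)) * of_real (E x / R x * inverse (Q x) * (x * Q x)))"
    by (rule integral_cong)
  moreover have "norm (integral {u..v}
      (\<lambda>x. exp (\<i> * of_real (P x)) * of_real (E x / R x * inverse (Q x) * (x * Q x))))
    \<le> 32 * (1 / R v) * (1 / \<epsilon>)"
  proof (rule van_der_Corput_amplitude_bound[where P'="\<lambda>x. x * Q x" and g="\<lambda>x. E x / R x"
        and h="\<lambda>x. inverse (Q x)", OF \<open>u \<le> v\<close>])
    show "(P has_real_derivative x * Q x) (at x)" if "x \<in> {u..v}" for x
      using P_has_derivative that assms by simp
    show "mono_on {u..v} (\<lambda>x. E x / R x) \<or> antimono_on {u..v} (\<lambda>x. E x / R x)"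
      using assms by (auto intro!: mono_onI E_div_R_mono)
    show "\<bar>E x / R x\<bar> \<le> 1 / R v" if "x \<in> {u..v}" for x
      using that assms E_pos[of x] E_le_1[of x] R_pos[of x] R_antimono[of x v] R_v
      by (auto intro!: frac_le)
    show "mono_on {u..v} (\<lambda>x. inverse (Q x)) \<or> antimono_on {u..v} (\<lambda>x. inverse (Q x))"
    proof (rule monotone_inverse_of_constant_sign)
      have "{u..v} \<subseteq> {0<..}" using assms by auto
      then show "mono_on {u..v} Q \<or> antimono_on {u..v} Q"
        using Q_monotone by (meson monotone_on_subset)
      show "(\<forall>x\<in>{u..v}. 0 < Q x) \<or> (\<forall>x\<in>{u..v}. Q x < 0)"
        using Q_away \<open>0 < \<epsilon>\<close> by force
    qed
    show "\<bar>inverse (Q x)\<bar> \<le> 1 / \<epsilon>" if "x \<in> {u..v}" for x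
      using Q_ne[OF that] \<open>0 < \<epsilon>\<close> by (simp add: le_imp_inverse_le divide_inverse)
  qed
  ultimately show ?thesis by simp
qed

(* R vanishes at L when rho_k = rho_l; near L only the trivial bound is available. *)
lemma endpoint_cutoff:
  assumes "0 < T" "T < L\<^sup>2"
  obtains w where "0 < w" "w < L" "w\<^sup>2 = L\<^sup>2 - T" "sqrt T \<le> R w"
    "norm (integral {w..L} f) \<le> sqrt T"
proof
  define w where "w = sqrt (L\<^sup>2 - T)"
  show "0 < w" "w\<^sup>2 = L\<^sup>2 - T" using assms by (auto simp: w_def)
  show "w < L" using assms L_pos real_sqrt_less_mono[of "L\<^sup>2 - T" "L\<^sup>2"] by (simp add: w_def)
  show "sqrt T \<le> R w" using sqrt_\<rho>_l_diff_le_R[of w] \<open>w\<^sup>2 = L\<^sup>2 - T\<close> L_square by simp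
  show "norm (integral {w..L} f) \<le> sqrt T"
    using norm_integral_le_sqrt[of w L] \<open>0 < w\<close> \<open>w < L\<close> \<open>w\<^sup>2 = L\<^sup>2 - T\<close> by simp
qed

lemma norm_integral_le_L: "norm (integral {0..L} f) \<le> L"
  using norm_integral_le_sqrt[of 0 L] L_pos by simp

lemma norm_integral_le_if_Q_ge_half:
  assumes "0 < u" and Q_ge: "\<And>x. u \<le> x \<Longrightarrow> x < L \<Longrightarrow> 1/2 \<le> Q x"
  shows "norm (integral {0..L} f) \<le> 65 + min (1 / c k) u"
proof (cases "L\<^sup>2 \<le> u\<^sup>2 + 1")
  case True
  then have "L\<^sup>2 \<le> (u + 1)\<^sup>2" using \<open>0 < u\<close> by (simp add: power2_sum)
  then have "L \<le> u + 1" using \<open>0 < u\<close> by (auto intro: power2_le_imp_le)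
  then show ?thesis using norm_integral_le_L norm_integral_le_inverse_c_k[of 0 L] L_pos by auto
next
  case False
  then have "1 < L\<^sup>2" using zero_le_power2[of u] by linarith
  then obtain w where "0 < w" "w < L" "w\<^sup>2 = L\<^sup>2 - 1" and R_w: "1 \<le> R w"
    and tail: "norm (integral {w..L} f) \<le> 1"
    using endpoint_cutoff[of 1] by auto
  then have "u\<^sup>2 < w\<^sup>2" using False by linarith
  then have "u < w" using power_less_imp_less_base[of u 2 w] \<open>0 < w\<close> by simp
  have head: "norm (integral {0..u} f) \<le> min (1 / c k) u"
    using norm_integral_le_inverse_c_k[of 0 u] norm_integral_le_sqrt[of 0 u] \<open>0 < u\<close> \<open>u < w\<close> \<open>w < L\<close>
    by simp
  have "norm (integral {u..w} f) \<le> 32 / (R w * (1/2))"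
    using Q_ge \<open>0 < u\<close> \<open>u < w\<close> \<open>w < L\<close> by (intro norm_integral_le_van_der_Corput) auto
  also have "\<dots> \<le> 64" using R_w by (simp add: field_simps)
  finally have "norm (integral {u..w} f) \<le> 64" .
  then show ?thesis
    using head tail norm_integral_split[of 0 u L] norm_integral_split[of u w L] \<open>0 < u\<close> \<open>u < w\<close> \<open>w < L\<close>
    by linarith
qed

lemma norm_integral_le_B_div_c_k: "norm (integral {0..L} f) \<le> 66 * (1 + B / c k)"
proof -
  have "norm (integral {0..L} f) \<le> 65 + min (1 / c k) (2 * B)"
  proof (rule norm_integral_le_if_Q_ge_half)
    show "0 < 2 * B" using B_pos by simp
    fix x assume "2 * B \<le> x" "x < L"
    then have "0 < x" using B_pos by simp
    have "B / x \<le> 1/2" using \<open>0 < x\<close> \<open>2 * B \<le> x\<close> by (simp add: field_simps)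
    then have "g x \<le> 1/2" using g_le_B_div[OF \<open>0 < x\<close>] by linarith
    then show "1/2 \<le> Q x" unfolding Q_def using s_sign g_nonneg[OF \<open>0 < x\<close>] by auto
  qed
  moreover have "min (1 / c k) (2 * B) \<le> 1 + 2 * B / c k"
  proof (cases "1 \<le> c k")
    case True
    then have "1 / c k \<le> 1" by simp
    moreover have "0 \<le> 2 * B / c k" using c_k_pos B_pos by simp
    ultimately show ?thesis using min.cobounded1[of "1 / c k" "2 * B"] by linarith
  next
    case False
    then have "2 * B \<le> 2 * B / c k" using c_k_pos B_pos by (simp add: field_simps)
    then show ?thesis using min.cobounded2[of "1 / c k" "2 * B"] by linarith
  qed
  moreover have "0 \<le> B / c k" using c_k_pos B_pos by simp
  ultimately show ?thesis by simp
qed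

lemma norm_integral_near_stationary_point:
  assumes "s = -1" "0 < p" "p \<le> q" "q \<le> L" "- \<epsilon> \<le> Q p" "Q q \<le> \<epsilon>" "\<epsilon> \<le> 1/2"
  shows "norm (integral {p..q} f) \<le> sqrt (8 * D\<^sup>2 * \<epsilon>)"
proof -
  note Q_eq = Q_eq_if_s_negative[OF \<open>s = -1\<close>]
  have "g q * (q\<^sup>2 - p\<^sup>2) / (2 * D\<^sup>2) \<le> g p - g q" using assms by (intro g_decrement) auto
  also have "\<dots> \<le> 2 * \<epsilon>" using Q_eq[of p] Q_eq[of q] assms by linarith
  finally have "g q * (q\<^sup>2 - p\<^sup>2) \<le> 4 * D\<^sup>2 * \<epsilon>"
    using D_ge_1 by (simp add: field_simps)
  moreover have "(1/2) * (q\<^sup>2 - p\<^sup>2) \<le> g q * (q\<^sup>2 - p\<^sup>2)"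
  proof (rule mult_right_mono)
    show "1/2 \<le> g q" using Q_eq[of q] assms by linarith
    show "0 \<le> q\<^sup>2 - p\<^sup>2" using assms by (simp add: power_mono)
  qed
  ultimately have "(1/2) * (q\<^sup>2 - p\<^sup>2) \<le> 4 * D\<^sup>2 * \<epsilon>" by linarith
  then have "sqrt (q\<^sup>2 - p\<^sup>2) \<le> sqrt (8 * D\<^sup>2 * \<epsilon>)" by simp
  moreover have "norm (integral {p..q} f) \<le> sqrt (q\<^sup>2 - p\<^sup>2)"
    using \<open>0 < p\<close> \<open>p \<le> q\<close> \<open>q \<le> L\<close> by (intro norm_integral_le_sqrt) auto
  ultimately show ?thesis by linarith
qed

lemma norm_integral_le_sqrt_D_van_der_Corput:
  assumes "0 < u" "u \<le> v" "v < L" and R_v: "sqrt D \<le> R v"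
    and "(\<forall>x\<in>{u..v}. 1/D \<le> Q x) \<or> (\<forall>x\<in>{u..v}. Q x \<le> - (1/D))"
  shows "norm (integral {u..v} f) \<le> 32 * sqrt D"
proof -
  have "0 < sqrt D" using D_ge_1 by simp
  then have "0 < R v" using R_v by linarith
  have "norm (integral {u..v} f) \<le> 32 / (R v * (1/D))"
    using assms D_ge_1 by (intro norm_integral_le_van_der_Corput) auto
  also have "\<dots> \<le> 32 / (sqrt D * (1/D))"
    using R_v \<open>0 < sqrt D\<close> \<open>0 < R v\<close> D_ge_1
    by (intro divide_left_mono mult_right_mono mult_pos_pos) auto
  also have "\<dots> = 32 * sqrt D" using D_ge_1 by (simp add: field_simps real_div_sqrt)
  finally show ?thesis .
qed

lemma norm_integral_from_1_le_sqrt_D: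
  assumes "s = -1" "2 \<le> D" "1 \<le> w" "w < L" and R_w: "sqrt D \<le> R w"
  shows "norm (integral {1..w} f) \<le> 67 * sqrt D"
proof -
  have D_pos: "0 < D" using \<open>2 \<le> D\<close> by simp
  have away: "norm (integral {u..v} f) \<le> 32 * sqrt D"
    if "1 \<le> u" "u \<le> v" "v \<le> w" "(\<forall>x\<in>{u..v}. 1/D \<le> Q x) \<or> (\<forall>x\<in>{u..v}. Q x \<le> - (1/D))"
    for u v
    using that assms R_antimono[of v w] by (intro norm_integral_le_sqrt_D_van_der_Corput) auto
  have "mono_on {1..w} Q"
    using g_antimono by (auto intro!: mono_onI simp: Q_eq_if_s_negative[OF \<open>s = -1\<close>])
  moreover have "continuous_on {1..w} Q" by (rule continuous_on_Q) simp
  ultimately obtain p q where pq: "1 \<le> p" "p \<le> q" "q \<le> w"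
    and left: "p = 1 \<or> (\<forall>x\<in>{1..p}. Q x \<le> - (1/D))"
    and mid: "p = q \<or> (- (1/D) \<le> Q p \<and> Q q \<le> 1/D)"
    and right: "q = w \<or> (\<forall>x\<in>{q..w}. 1/D \<le> Q x)"
    using mono_on_sign_partition[OF \<open>1 \<le> w\<close>, where \<epsilon>="1/D"] D_pos by auto
  have "norm (integral {1..p} f) \<le> 32 * sqrt D" using left away[of 1 p] pq D_pos by auto
  moreover have "norm (integral {q..w} f) \<le> 32 * sqrt D" using right away[of q w] pq D_pos by auto
  moreover have "norm (integral {p..q} f) \<le> 3 * sqrt D"
    using mid
  proof
    assume "- (1/D) \<le> Q p \<and> Q q \<le> 1/D"
    then have "norm (integral {p..q} f) \<le> sqrt (8 * D\<^sup>2 * (1/D))"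
      using assms pq by (intro norm_integral_near_stationary_point) auto
    also have "\<dots> = sqrt 8 * sqrt D" using D_pos by (simp add: power2_eq_square real_sqrt_mult)
    also have "\<dots> \<le> 3 * sqrt D" using real_le_lsqrt[of 3 8] D_pos by simp
    finally show ?thesis .
  qed (use D_pos in simp)
  ultimately show ?thesis
    using norm_integral_split[of 1 p w] norm_integral_split[of p q w] pq \<open>w < L\<close> by linarith
qed

lemma norm_integral_le_sqrt_D_if_s_negative:
  assumes "s = -1"
  shows "norm (integral {0..L} f) \<le> 69 * sqrt D"
proof (cases "L\<^sup>2 \<le> D + 1")
  case True
  then have "L\<^sup>2 \<le> (2 * sqrt D)\<^sup>2" using D_ge_1 by (simp add: power_mult_distrib)
  then have "L \<le> 2 * sqrt D" using D_ge_1 by (auto intro: power2_le_imp_le)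
  moreover have "0 \<le> sqrt D" using D_ge_1 by simp
  ultimately show ?thesis using norm_integral_le_L by linarith
next
  case False
  have "2 < D"
  proof (rule ccontr)
    assume "\<not> 2 < D"
    then have "D * D \<le> 2 * D" using D_ge_1 by (intro mult_right_mono) auto
    then show False using False \<open>\<not> 2 < D\<close> D_square L_square \<sigma>_1_nonneg
      by (simp add: power2_eq_square)
  qed
  moreover have "D < L\<^sup>2" using False by simp
  ultimately obtain w where "0 < w" "w < L" "w\<^sup>2 = L\<^sup>2 - D" "sqrt D \<le> R w"
    and tail: "norm (integral {w..L} f) \<le> sqrt D"
    using endpoint_cutoff[of D] by auto
  then have "1 < w\<^sup>2" using False by simp
  then have "1 < w" using power_less_imp_less_base[of 1 2 w] \<open>0 < w\<close> by simp
  have "norm (integral {0..1} f) \<le> 1"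
    using norm_integral_le_sqrt[of 0 1] \<open>1 < w\<close> \<open>w < L\<close> by simp
  moreover have "1 \<le> sqrt D" using D_ge_1 by simp
  moreover have "norm (integral {1..w} f) \<le> 67 * sqrt D"
    using assms \<open>2 < D\<close> \<open>1 < w\<close> \<open>w < L\<close> \<open>sqrt D \<le> R w\<close> by (intro norm_integral_from_1_le_sqrt_D) auto
  ultimately show ?thesis
    using tail norm_integral_split[of 0 1 L] norm_integral_split[of 1 w L] \<open>1 < w\<close> \<open>w < L\<close>
    by linarith
qed

lemma norm_integral_le_sqrt_D: "norm (integral {0..L} f) \<le> 69 * sqrt D"
proof (cases "s = 1")
  case True
  have "1/2 \<le> Q x" if "1 \<le> x" for x
    unfolding Q_def using True g_nonneg[of x] that by simp
  then have "norm (integral {0..L} f) \<le> 65 + min (1 / c k) 1"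
    by (intro norm_integral_le_if_Q_ge_half) auto
  moreover have "1 \<le> sqrt D" using D_ge_1 by simp
  ultimately show ?thesis by linarith
next
  case False
  then show ?thesis using s_sign norm_integral_le_sqrt_D_if_s_negative by auto
qed

lemma sqrt_D_eq: "sqrt D = (1 + \<sigma> 1 + \<rho> l) powr (1/4)"
proof -
  have "(1 + \<sigma> 1 + \<rho> l) powr (1/4) = ((1 + \<sigma> 1 + \<rho> l) powr (1/2)) powr (1/2)"
    by (simp add: powr_powr)
  also have "\<dots> = sqrt D" using \<sigma>_1_nonneg \<rho>_l_pos by (simp add: D_def powr_half_sqrt)
  finally show ?thesis by simp
qed

lemma one_plus_B_div_c_k_le:
  "1 + B / c k \<le> real m powr (3/2) / c k * Max {b j + c i | j i. j \<in> {1..m} \<and> i \<in> {1..l}}"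
proof -
  define S where "S = {b j + c i | j i. j \<in> {1..m} \<and> i \<in> {1..l}}"
  have "S = (\<lambda>(j, i). b j + c i) ` ({1..m} \<times> {1..l})" unfolding S_def by force
  then have "finite S" by simp
  have le_Max: "b j + c k \<le> Max S" if "j \<in> {1..m}" for j
    using Max_ge[OF \<open>finite S\<close>] that k_range unfolding S_def by blast
  have "B + c k \<le> B + real m * c k" using m_pos c_k_pos by simp
  also have "\<dots> = (\<Sum>j=1..m. b j + c k)" unfolding B_def by (simp add: sum.distrib)
  also have "\<dots> \<le> real m * Max S" using sum_mono[of "{1..m}", OF le_Max] by simp
  also have "\<dots> \<le> real m powr (3/2) * Max S"
  proof (rule mult_right_mono)
    show "real m \<le> real m powr (3/2)" using m_pos powr_mono[of 1 "3/2" "real m"] by simp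
    have "0 < b 1" using b_pos m_pos by simp
    then show "0 \<le> Max S" using le_Max[of 1] m_pos c_k_pos by simp
  qed
  finally have "(B + c k) / c k \<le> real m powr (3/2) * Max S / c k"
    using c_k_pos by (intro divide_right_mono) auto
  moreover have "1 + B / c k = (B + c k) / c k" using c_k_pos by (simp add: field_simps)
  ultimately show ?thesis unfolding S_def[symmetric] by simp
qed

lemma norm_integral_le_min:
  "norm (integral {0..L} f) \<le> 69 * min ((1 + \<sigma> 1 + \<rho> l) powr (1/4))
     (real m powr (3/2) / c k * Max {b j + c i | j i. j \<in> {1..m} \<and> i \<in> {1..l}})"
proof -
  have "norm (integral {0..L} f) \<le> 66 * (1 + B / c k)" by (rule norm_integral_le_B_div_c_k)
  also have "\<dots> \<le> 69 * (1 + B / c k)" using B_pos c_k_pos by (simp add: field_simps)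
  finally show ?thesis
    using norm_integral_le_sqrt_D one_plus_B_div_c_k_le sqrt_D_eq by (simp add: min_def)
qed

end

theorem lemma7p6:
  shows "\<exists>C0::real. \<forall>(m::nat) (l::nat) (\<sigma>::nat \<Rightarrow> real) (\<rho>::nat \<Rightarrow> real)
            (b::nat \<Rightarrow> real) (c::nat \<Rightarrow> real) (k::nat) (s::real).
     1 \<le> m \<longrightarrow> 1 \<le> l \<longrightarrow>
     (\<forall>j\<in>{1..<m}. \<sigma> j \<ge> \<sigma> (Suc j)) \<longrightarrow> \<sigma> m \<ge> 0 \<longrightarrow>
     (\<forall>i\<in>{1..<l}. \<rho> i \<ge> \<rho> (Suc i)) \<longrightarrow> \<rho> l > 0 \<longrightarrow>
     (\<forall>j\<in>{1..m}. b j > 0) \<longrightarrow> (\<forall>i\<in>{1..l}. c i > 0) \<longrightarrow>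
     k \<in> {1..l} \<longrightarrow> s \<in> {1, -1} \<longrightarrow>
     norm (integral {0..sqrt (\<rho> l)}
        (\<lambda>x::real. exp (\<i> * complex_of_real (x\<^sup>2 / 2))
           * exp (\<i> * complex_of_real (s * (\<Sum>j=1..m. b j * sqrt (x\<^sup>2 + \<sigma> j))))
           * complex_of_real (exp (- (\<Sum>i=1..l. c i * sqrt (\<rho> i - x\<^sup>2)))
                               * x / sqrt (\<rho> k - x\<^sup>2))))
     \<le> C0 * min ((1 + \<sigma> 1 + \<rho> l) powr (1/4))
                 (real m powr (3/2) / c k
                    * Max {b j + c i | j i. j \<in> {1..m} \<and> i \<in> {1..l}})"
  apply (intro exI[of _ 69] allI impI)
  subgoal premises hyps for m l \<sigma> \<rho> b c k s
  proof -
    interpret damped_oscillatory_integral m l \<sigma> \<rho> b c k s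
      using hyps by unfold_locales
    show ?thesis using norm_integral_le_min unfolding f_def L_def .
  qed
  done

end
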